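(* Let $n\in\mathbf{N}$, $b\in\mathbf{N}$ and $\ell\in\mathbf{N}$. There exists $C>0$ such that for all $t\ge1$ $$\|m^2_{b,\ell,L}(\cdot,t)\|_{L^2(\mathbf{R}^n_\xi)}\le\begin{cases}Ct^{2(b-1)-1}e^{-t/2}+Ct^{-\frac n4-\ell},& b\ge2,\\ Ce^{-t/2}+Ct^{-\frac n4-\ell},& b=1.\end{cases}$$
   Context: Expressions $\cos(t\sqrt z)$, $\sin(t\sqrt z)/\sqrt z$ denote the entire functions $\sum_m(-1)^mt^{2m}z^m/(2m)!$, $\sum_m(-1)^mt^{2m+1}z^m/(2m+1)!$ of $z\in\mathbf{R}$. For $r\ge0$, $c\in\mathbf{R}$, $a\in[0,1]$ with $4ar^2<1$, $t>0$: $f(r,c,t)=\cos(t\sqrt{r^2-c})$, $h(r,a,t)=\frac{1}{\sqrt{1-4ar^2}}\exp(-\frac{2tr^2}{1+\sqrt{1-4ar^2}})$. For $\xi\neq0$: $W^2_b(\xi,t)=2t^{-1}\sum_{k=0}^{b-2}(\frac14)^k\frac1{k!}\partial_c^{k+1}f(|\xi|,0,t)$ if $b\ge2$ and $W^2_1\equiv0$; $D^2_\ell(\xi,t)=\sum_{k=0}^{\ell-1}\frac1{k!}\partial_a^kh(|\xi|,0,t)$. Let $\chi_L$ be a smooth function on $[0,\infty)$ with $\chi_L(r)=0$ for $r\ge\frac13$ and $\chi_L(r)=1$ for $r\le\frac14$. Define $m^2_{b,\ell,L}(\xi,t)=\chi_L(|\xi|)\Big[e^{-t/2}\frac{\sin(t\sqrt{|\xi|^2-1/4})}{\sqrt{|\xi|^2-1/4}}-e^{-t/2}W^2_b(\xi,t)-D^2_\ell(\xi,t)\Big]$.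 *)

theory Defs
  imports "HOL-Analysis.Analysis"
begin

text \<open>The entire functions cos(t sqrt z) and sin(t sqrt z)/sqrt z of z, given by their power series.\<close>
definition cos_sqrt :: "real \<Rightarrow> real \<Rightarrow> real" where
  "cos_sqrt t z = (\<Sum>m. (-1)^m * t^(2*m) * z^m / fact (2*m))"

definition sinc_sqrt :: "real \<Rightarrow> real \<Rightarrow> real" where
  "sinc_sqrt t z = (\<Sum>m. (-1)^m * t^(2*m+1) * z^m / fact (2*m+1))"

definition f_fun :: "real \<Rightarrow> real \<Rightarrow> real \<Rightarrow> real" where
  "f_fun r c t = cos_sqrt t (r^2 - c)"

definition h_fun :: "real \<Rightarrow> real \<Rightarrow> real \<Rightarrow> real" where
  "h_fun r a t = 1 / sqrt (1 - 4*a*r^2) * exp (- (2*t*r^2) / (1 + sqrt (1 - 4*a*r^2)))"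

definition W2 :: "nat \<Rightarrow> real \<Rightarrow> real \<Rightarrow> real" where
  "W2 b r t = (if b \<ge> 2 then
     2 / t * (\<Sum>k\<le>b-2. (1/4)^k / fact k * (deriv ^^ (k+1)) (\<lambda>c. f_fun r c t) 0)
   else 0)"

definition D2 :: "nat \<Rightarrow> real \<Rightarrow> real \<Rightarrow> real" where
  "D2 l r t = (\<Sum>k<l. 1 / fact k * (deriv ^^ k) (\<lambda>a. h_fun r a t) 0)"

definition m2 :: "(real \<Rightarrow> real) \<Rightarrow> nat \<Rightarrow> nat \<Rightarrow> real^'n \<Rightarrow> real \<Rightarrow> real" where
  "m2 chiL b l \<xi> t = chiL (norm \<xi>) *
     (exp (-t/2) * sinc_sqrt t ((norm \<xi>)^2 - 1/4)
      - exp (-t/2) * W2 b (norm \<xi>) t - D2 l (norm \<xi>) t)"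

text \<open>Smoothness (C-infinity) of a real function on a set S: there is a sequence of
  successive derivatives (one-sided at boundary points, via "within S").\<close>
definition smooth_on_real :: "real set \<Rightarrow> (real \<Rightarrow> real) \<Rightarrow> bool" where
  "smooth_on_real S g \<longleftrightarrow> (\<exists>D. D 0 = g \<and>
     (\<forall>k. \<forall>x\<in>S. (D k has_real_derivative D (Suc k) x) (at x within S)))"

end

theory Submission
  imports Defs "HOL-Complex_Analysis.Complex_Analysis" "HOL-Probability.Probability"
begin

text \<open>
  Write r = |xi| and, for r <= 1/3, q = sqrt(1/4 - r^2). Then the sine term is
  e^(-t/2) sinh(tq)/q = h(r,1,t) - e^(-t/2) e^(-tq)/(2q), and D^2_l is the Taylor polynomial of
  degree l-1 at a = 0 of a |-> h(r,a,t), evaluated at a = 1. This function is holomorphic on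
  |a| < 1/(6r^2) and bounded by sqrt 2 e^(-tr^2/3) on |a| <= 1/(8r^2), so Cauchy's estimates bound
  the Taylor remainder by C r^(2l) e^(-tr^2/3) <= C' t^(-l) e^(-tr^2/6). Cauchy's estimates for
  the entire function c |-> cos(t sqrt(r^2 - c)) on |c| <= 1/9 give |W^2_b| <= C e^(12t/25),
  which the factor e^(-t/2) beats. Hence |m^2(xi,t)| <= C t^(-l) e^(-t|xi|^2/12), and a Gaussian
  integral bounds the L^2 norm by C t^(-n/4-l).
\<close>

lemma real_higher_deriv_from_holomorphic:
  fixes g :: "real \<Rightarrow> real" and H :: "complex \<Rightarrow> complex"
  assumes holH: "H holomorphic_on S" and S: "open S"
    and I: "open I" and IS: "\<And>x. x \<in> I \<Longrightarrow> complex_of_real x \<in> S"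
    and eq: "\<And>x. x \<in> I \<Longrightarrow> H (of_real x) = of_real (g x)"
  shows "\<forall>x\<in>I. (deriv ^^ k) H (of_real x) = of_real ((deriv ^^ k) g x)
     \<and> ((deriv ^^ k) g has_real_derivative (deriv ^^ Suc k) g x) (at x)"
proof -
  have step: "(deriv ^^ Suc k) H (of_real x) = of_real ((deriv ^^ Suc k) g x)
     \<and> ((deriv ^^ k) g has_real_derivative (deriv ^^ Suc k) g x) (at x)"
    if IH: "\<forall>y\<in>I. (deriv ^^ k) H (of_real y) = of_real ((deriv ^^ k) g y)" and x: "x \<in> I" for k x
  proof -
    define D where "D = (deriv ^^ Suc k) H (of_real x)"
    have "(deriv ^^ k) H holomorphic_on S" using holH S by (rule holomorphic_higher_deriv)
    then have "((deriv ^^ k) H has_field_derivative D) (at (of_real x))"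
      unfolding D_def using holomorphic_derivI[OF _ S IS[OF x]] by simp
    then have "((\<lambda>y. (deriv ^^ k) H (of_real y)) has_vector_derivative D) (at x)"
      by (rule has_vector_derivative_real_field)
    then have d: "((\<lambda>y. complex_of_real ((deriv ^^ k) g y)) has_vector_derivative D) (at x)"
      by (rule has_vector_derivative_transform_within_open[OF _ I x]) (use IH in auto)
    have dr: "((deriv ^^ k) g has_real_derivative Re D) (at x)"
      using has_field_derivative_Re[OF d] by simp
    have "((\<lambda>y. 0::real) has_real_derivative Im D) (at x)"
      using has_field_derivative_Im[OF d] by simp
    then have "Im D = 0" using DERIV_unique DERIV_const by blast
    moreover have "(deriv ^^ Suc k) g x = Re D"
      using DERIV_imp_deriv[OF dr] by simp
    ultimately show ?thesis using dr unfolding D_def[symmetric]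
      by (simp add: complex_eq_iff)
  qed
  show ?thesis
  proof (induction k)
    case 0
    then show ?case using step[of 0] eq by auto
  next
    case (Suc k)
    then have "\<forall>y\<in>I. (deriv ^^ Suc k) H (of_real y) = of_real ((deriv ^^ Suc k) g y)"
      using step by blast
    then show ?case using step by blast
  qed
qed

lemma sums_cosh_even_powers: "(\<lambda>m. y^(2*m) / fact (2*m)) sums cosh (y::real)"
proof -
  define F where "F n = (if even n then y ^ n /\<^sub>R fact n else 0)" for n :: nat
  have "strict_mono (\<lambda>m::nat. 2*m)" by (simp add: strict_mono_def)
  moreover have "F n = 0" if "n \<notin> range (\<lambda>m::nat. 2*m)" for n
    using that unfolding F_def by (auto elim!: evenE)
  ultimately have "(\<lambda>m. F (2*m)) sums cosh y \<longleftrightarrow> F sums cosh y"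
    by (rule sums_mono_reindex)
  moreover have "F sums cosh y" unfolding F_def by (rule cosh_converges)
  ultimately show ?thesis by (simp add: F_def divide_inverse mult.commute)
qed

lemma sums_sinh_odd_powers: "(\<lambda>m. y^(2*m+1) / fact (2*m+1)) sums sinh (y::real)"
proof -
  define F where "F n = (if even n then 0 else y ^ n /\<^sub>R fact n)" for n :: nat
  have "strict_mono (\<lambda>m::nat. 2*m+1)" by (simp add: strict_mono_def)
  moreover have "F n = 0" if "n \<notin> range (\<lambda>m::nat. 2*m+1)" for n
    using that unfolding F_def by (auto elim!: oddE)
  ultimately have "(\<lambda>m. F (2*m+1)) sums sinh y \<longleftrightarrow> F sums sinh y"
    by (rule sums_mono_reindex)
  moreover have "F sums sinh y" unfolding F_def by (rule sinh_converges)
  ultimately show ?thesis by (simp add: F_def divide_inverse mult.commute)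
qed

lemma cosh_le_exp_abs: "cosh (y::real) \<le> exp \<bar>y\<bar>"
proof -
  have "exp y + exp (-y) \<le> exp \<bar>y\<bar> + exp \<bar>y\<bar>" by (intro add_mono) simp_all
  then show ?thesis unfolding cosh_field_def by simp
qed

lemma power_le_fact_mult_exp: assumes "0 \<le> (x::real)" shows "x^n \<le> fact n * exp x"
proof -
  have "summable (\<lambda>k. x^k /\<^sub>R fact k)" using exp_converges sums_summable by blast
  then have "(\<Sum>k\<in>{n}. x^k /\<^sub>R fact k) \<le> (\<Sum>k. x^k /\<^sub>R fact k)"
    using assms by (intro sum_le_suminf) auto
  also have "\<dots> = exp x" using exp_converges sums_unique by metis
  finally show ?thesis by (simp add: divide_simps mult.commute)
qed

lemma exp_neg_le_fact_div_power: assumes "(t::real) > 0" shows "exp (- t/100) \<le> fact l * 100^l / t^l"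
proof -
  have "(t/100)^l \<le> fact l * exp (t/100)" by (rule power_le_fact_mult_exp) (use assms in simp)
  then have "t^l * exp (- t/100) \<le> fact l * 100^l" by (simp add: power_divide field_simps exp_minus)
  then show ?thesis using assms by (simp add: field_simps)
qed

lemma higher_deriv_const: "(deriv ^^ Suc k) (\<lambda>_. c::real) = (\<lambda>_. 0)"
  by (induction k) (simp_all add: fun_eq_iff)

lemma smooth_on_real_imp_continuous_on: assumes "smooth_on_real S g" shows "continuous_on S g"
proof -
  obtain D where "D 0 = g" and "\<And>k x. x \<in> S \<Longrightarrow> (D k has_real_derivative D (Suc k) x) (at x within S)"
    using assms unfolding smooth_on_real_def by blast
  then show ?thesis unfolding continuous_on_eq_continuous_within
    using DERIV_continuous by metis
qed

subsection \<open>The entire extension of \<open>cos(t\<surd>z)\<close>\<close>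

definition cos_sqrt_complex :: "real \<Rightarrow> complex \<Rightarrow> complex" where
  "cos_sqrt_complex t z = (\<Sum>m. complex_of_real ((-1)^m * t^(2*m) / fact (2*m)) * z^m)"

lemma summable_cos_sqrt_series:
  fixes z :: "'a::{real_normed_field,banach}"
  shows "summable (\<lambda>m. of_real ((-1)^m * t^(2*m) / fact (2*m)) * z^m)"
proof (rule summable_comparison_test')
  show "summable (\<lambda>m. (t^2 * norm z)^m /\<^sub>R fact m)" by (rule summable_exp_generic)
  fix m :: nat
  have "norm (of_real ((-1)^m * t^(2*m) / fact (2*m)) * z^m) = (t^2)^m * norm z ^ m / fact (2*m)"
    unfolding norm_mult norm_of_real norm_power by (simp add: abs_mult power_abs power_mult)
  also have "\<dots> \<le> (t^2)^m * norm z ^ m / fact m"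
    by (intro divide_left_mono fact_mono) auto
  also have "\<dots> = (t^2 * norm z)^m /\<^sub>R fact m"
    by (simp add: power_mult_distrib divide_inverse mult.commute)
  finally show "norm (of_real ((-1)^m * t^(2*m) / fact (2*m)) * z^m) \<le> (t^2 * norm z)^m /\<^sub>R fact m" .
qed

lemma cos_sqrt_complex_of_real: "cos_sqrt_complex t (of_real x) = of_real (cos_sqrt t x)"
proof -
  have "(\<lambda>m. (-1)^m * t^(2*m) * x^m / fact (2*m)) sums cos_sqrt t x"
    unfolding cos_sqrt_def using summable_cos_sqrt_series[of t x]
    by (intro summable_sums) (simp add: field_simps)
  then have "(\<lambda>m. complex_of_real ((-1)^m * t^(2*m) * x^m / fact (2*m))) sums of_real (cos_sqrt t x)"
    by (subst sums_of_real_iff)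
  then have "(\<lambda>m. complex_of_real ((-1)^m * t^(2*m) / fact (2*m)) * (of_real x)^m)
      sums of_real (cos_sqrt t x)"
    by (simp add: field_simps)
  then show ?thesis unfolding cos_sqrt_complex_def by (rule sums_unique[symmetric])
qed

lemma norm_cos_sqrt_complex_le: "norm (cos_sqrt_complex t z) \<le> cosh (\<bar>t\<bar> * sqrt (norm z))"
proof -
  have "norm (cos_sqrt_complex t z) \<le> (\<Sum>m. (\<bar>t\<bar> * sqrt (norm z))^(2*m) / fact (2*m))"
    unfolding cos_sqrt_complex_def
  proof (rule norm_suminf_le)
    show "summable (\<lambda>m. (\<bar>t\<bar> * sqrt (norm z))^(2*m) / fact (2*m))"
      using sums_cosh_even_powers sums_summable by blast
    fix m
    show "norm (complex_of_real ((-1)^m * t^(2*m) / fact (2*m)) * z^m)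
        \<le> (\<bar>t\<bar> * sqrt (norm z))^(2*m) / fact (2*m)"
      unfolding norm_mult norm_of_real norm_power
      by (simp add: abs_mult power_abs power_mult power_mult_distrib)
  qed
  also have "\<dots> = cosh (\<bar>t\<bar> * sqrt (norm z))" using sums_cosh_even_powers sums_unique by metis
  finally show ?thesis .
qed

lemma holomorphic_cos_sqrt_complex: "cos_sqrt_complex t holomorphic_on UNIV"
proof -
  have "\<And>z. cos_sqrt_complex t field_differentiable at z"
    unfolding cos_sqrt_complex_def field_differentiable_def
    using termdiffs_strong_converges_everywhere[OF summable_cos_sqrt_series] by blast
  then show ?thesis by (simp add: holomorphic_on_def field_differentiable_at_within)
qed

subsection \<open>The holomorphic extension of \<open>a \<mapsto> h(r,a,t)\<close>\<close>

definition h_complex :: "real \<Rightarrow> real \<Rightarrow> complex \<Rightarrow> complex" where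
  "h_complex r t a = 1 / csqrt (1 - 4 * a * of_real (r^2)) *
    exp (- of_real (2*t*r^2) / (1 + csqrt (1 - 4 * a * of_real (r^2))))"

lemma Re_one_plus_csqrt_ge: "Re (1 + csqrt z) \<ge> 1"
  using Re_csqrt[of z] by simp

lemma Re_one_minus_le: "Re (1 - 4 * (a::complex) * of_real (r^2)) \<ge> 1 - 4 * r^2 * norm a"
proof -
  have "Re (4 * a * of_real (r^2)) \<le> norm (4 * a * of_real (r^2))" by (rule complex_Re_le_cmod)
  also have "\<dots> = 4 * r^2 * norm a" by (simp add: norm_mult norm_power)
  finally show ?thesis by simp
qed

lemma holomorphic_h_complex: "h_complex r t holomorphic_on {a. 6 * r^2 * norm a < 1}"
proof -
  have "1 - 4 * a * of_real (r^2) \<notin> \<real>\<^sub>\<le>\<^sub>0" if "6 * r^2 * norm a < 1" for a :: complex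
  proof
    assume "1 - 4 * a * of_real (r^2) \<in> \<real>\<^sub>\<le>\<^sub>0"
    then obtain x where "1 - 4 * a * of_real (r^2) = of_real x" "x \<le> 0"
      by (auto elim: nonpos_Reals_cases)
    moreover have "4 * r^2 * norm a \<le> 6 * r^2 * norm a" by (intro mult_right_mono) auto
    then have "Re (1 - 4 * a * of_real (r^2)) > 0" using that Re_one_minus_le[of r a] by simp
    ultimately show False by (metis Re_complex_of_real not_le)
  qed
  moreover have "1 + csqrt z \<noteq> 0" for z
    using Re_one_plus_csqrt_ge[of z] by (metis zero_complex.sel(1) not_one_le_zero)
  ultimately show ?thesis unfolding h_complex_def
    by (intro holomorphic_intros) force+
qed

lemma open_h_complex_domain: "open {a::complex. 6 * r^2 * norm a < 1}"
  by (intro open_Collect_less continuous_intros)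

lemma h_complex_of_real:
  assumes "6 * r^2 * \<bar>x\<bar> < 1" shows "h_complex r t (of_real x) = of_real (h_fun r x t)"
proof -
  have "x * (4*r^2) \<le> \<bar>x\<bar> * (6*r^2)" by (intro mult_mono) auto
  then have pos: "1 - 4*x*r^2 \<ge> 0" using assms by (simp add: algebra_simps)
  have e1: "1 - 4 * complex_of_real x * of_real (r^2) = of_real (1 - 4*x*r^2)" by simp
  have e2: "- complex_of_real (2*t*r^2) / (1 + complex_of_real (sqrt (1 - 4*x*r^2)))
      = of_real (- (2*t*r^2) / (1 + sqrt (1 - 4*x*r^2)))" by simp
  have e3: "1 / complex_of_real (sqrt (1 - 4*x*r^2)) = of_real (1 / sqrt (1 - 4*x*r^2))" by simp
  show ?thesis unfolding h_complex_def h_fun_def e1 csqrt_of_real[OF pos] e2 e3 exp_of_real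
    by (simp only: of_real_mult)
qed

lemma norm_h_complex_le:
  assumes "t \<ge> 0" and a: "4 * r^2 * norm a \<le> 1/2"
  shows "norm (h_complex r t a) \<le> sqrt 2 * exp (- (t*r^2) / 3)"
proof -
  define w where "w = 1 - 4 * a * of_real (r^2)"
  define s where "s = csqrt w"
  have nu: "norm (4 * a * of_real (r^2)) \<le> 1/2" using a by (simp add: norm_mult norm_power ac_simps)
  have wl: "norm w \<ge> 1/2"
    using norm_triangle_ineq2[of 1 "4 * a * of_real (r^2)"] nu unfolding w_def by simp
  have wu: "norm w \<le> 3/2"
    using norm_triangle_ineq4[of 1 "4 * a * of_real (r^2)"] nu unfolding w_def by simp
  have n1: "norm (1 / s) \<le> sqrt 2"
  proof -
    have "norm (1/s) = 1 / sqrt (norm w)" unfolding s_def by (simp add: norm_divide)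
    also have "\<dots> \<le> 1 / sqrt (1/2)" using wl by (intro divide_left_mono real_sqrt_le_mono mult_pos_pos) auto
    also have "\<dots> = sqrt 2" by (simp add: real_sqrt_divide)
    finally show ?thesis .
  qed
  have re1: "Re (1 + s) \<ge> 1" unfolding s_def by (rule Re_one_plus_csqrt_ge)
  have "sqrt (3/2) \<le> sqrt ((5/4)^2::real)" by (rule real_sqrt_le_mono) (simp add: power2_eq_square)
  moreover have "norm s \<le> sqrt (3/2)" unfolding s_def using wu by (simp add: real_sqrt_le_mono)
  ultimately have "norm (1 + s) \<le> 9/4" using norm_triangle_ineq[of 1 s] by simp
  then have "(norm (1 + s))^2 \<le> (9/4)^2" by (rule power_mono) simp
  then have ns2: "(norm (1 + s))^2 \<le> 6" by (simp add: power2_eq_square)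
  have "norm (1 + s) \<ge> 1" using re1 complex_Re_le_cmod[of "1+s"] by linarith
  then have np: "(norm (1+s))^2 > 0" by (metis less_le_trans zero_less_one zero_less_power)
  have "1/6 \<le> 1 / (norm (1+s))^2" using ns2 np by (intro divide_left_mono) auto
  also have "\<dots> \<le> Re (1 + s) / (norm (1 + s))^2" using re1 np by (intro divide_right_mono) auto
  also have "\<dots> = Re (1 / (1 + s))" by (simp add: Re_divide')
  finally have "- (2*t*r^2) * Re (1 / (1 + s)) \<le> - (2*t*r^2) * (1/6)"
    using assms(1) by (intro mult_left_mono_neg) auto
  then have "norm (exp (- of_real (2*t*r^2) / (1 + s))) \<le> exp (- (t*r^2) / 3)"
    by (simp add: Re_divide')
  then have "norm (1/s * exp (- of_real (2*t*r^2) / (1 + s))) \<le> sqrt 2 * exp (- (t*r^2) / 3)"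
    unfolding norm_mult using n1 by (intro mult_mono) auto
  then show ?thesis unfolding h_complex_def s_def w_def by simp
qed

lemma h_fun_higher_deriv:
  assumes "0 \<le> r" "r \<le> 1/3" and x: "\<bar>x\<bar> < 3/2"
  shows "(deriv ^^ k) (h_complex r t) (of_real x) = of_real ((deriv ^^ k) (\<lambda>a. h_fun r a t) x)
     \<and> ((deriv ^^ k) (\<lambda>a. h_fun r a t) has_real_derivative (deriv ^^ Suc k) (\<lambda>a. h_fun r a t) x) (at x)"
proof -
  have I: "open {x::real. 6 * r^2 * \<bar>x\<bar> < 1}" by (intro open_Collect_less continuous_intros)
  have "r^2 \<le> 1/9" using assms(1,2) power_mono[of r "1/3" 2] by (simp add: power2_eq_square)
  then have "6 * r^2 * \<bar>x\<bar> \<le> 6 * (1/9) * \<bar>x\<bar>" by (intro mult_right_mono) auto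
  then have "6 * r^2 * \<bar>x\<bar> < 1" using x by linarith
  then have "x \<in> {x::real. 6 * r^2 * \<bar>x\<bar> < 1}" by simp
  then show ?thesis
    using real_higher_deriv_from_holomorphic[OF holomorphic_h_complex open_h_complex_domain I _
        h_complex_of_real, where k=k]
    by auto
qed

lemma h_taylor_remainder_le_power:
  assumes r0: "0 < r" and r1: "r \<le> 1/3" and t: "t \<ge> 0" and l: "l \<ge> 1"
  shows "\<bar>h_fun r 1 t - D2 l r t\<bar> \<le> 18 * 8^l * r^(2*l) * exp (- (t*r^2)/3)"
proof -
  define g where "g = (\<lambda>a. h_fun r a t)"
  define \<rho> where "\<rho> = 1 / (8 * r^2)"
  define B where "B = 2 * exp (- (t*r^2)/3)"
  define q where "q = 8 * r^2"
  have r2: "r^2 \<le> 1/9" using r0 r1 power_mono[of r "1/3" 2] by (simp add: power2_eq_square)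
  have r2p: "r^2 > 0" using r0 by simp
  have q: "0 < q" "q \<le> 8/9" "\<rho> = 1 / q" unfolding q_def \<rho>_def using r2 r2p by auto
  have \<rho>1: "\<rho> > 1" unfolding \<rho>_def using r2 r2p by (simp add: field_simps)
  have sub: "cball 0 \<rho> \<subseteq> {a::complex. 6 * r^2 * norm a < 1}"
  proof
    fix a :: complex assume "a \<in> cball 0 \<rho>"
    then have "6 * r^2 * norm a \<le> 6 * r^2 * \<rho>" using r2p by (intro mult_left_mono) auto
    also have "\<dots> < 1" unfolding \<rho>_def using r2p by (simp add: field_simps)
    finally show "a \<in> {a::complex. 6 * r^2 * norm a < 1}" by simp
  qed
  have holb: "h_complex r t holomorphic_on ball 0 \<rho>"
    using holomorphic_h_complex sub ball_subset_cball holomorphic_on_subset by blast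
  have contc: "continuous_on (cball 0 \<rho>) (h_complex r t)"
    using holomorphic_h_complex sub holomorphic_on_imp_continuous_on holomorphic_on_subset by blast
  have bounded: "h_complex r t w \<in> ball 0 B" if "w \<in> ball 0 \<rho>" for w
  proof -
    have "4 * r^2 * norm w \<le> 4 * r^2 * \<rho>" using that r2p by (intro mult_left_mono) auto
    also have "\<dots> = 1/2" unfolding \<rho>_def using r2p by (simp add: field_simps)
    finally have "norm (h_complex r t w) \<le> sqrt 2 * exp (- (t*r^2)/3)" by (intro norm_h_complex_le t)
    also have "\<dots> < B" unfolding B_def
      by (intro mult_strict_right_mono) (auto simp: real_sqrt_less_iff[of 2 4, simplified])
    finally show ?thesis by simp
  qed
  define c where "c n = (deriv ^^ n) g 0 / fact n" for n
  have derivs: "(deriv ^^ n) (h_complex r t) 0 = of_real ((deriv ^^ n) g 0)" for n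
    using h_fun_higher_deriv[of r 0 n t] r0 r1 unfolding g_def by simp
  have "(\<lambda>n. (deriv ^^ n) (h_complex r t) 0 / fact n * (1 - 0)^n) sums h_complex r t 1"
    by (rule holomorphic_power_series[OF holb]) (use \<rho>1 in simp)
  moreover have "h_complex r t 1 = of_real (g 1)"
    using h_complex_of_real[of r 1 t] r2 unfolding g_def by simp
  ultimately have "(\<lambda>n. complex_of_real (c n)) sums of_real (g 1)"
    unfolding c_def derivs by simp
  then have "c sums g 1" by (simp add: sums_of_real_iff)
  moreover have "D2 l r t = (\<Sum>i<l. c i)" unfolding D2_def c_def g_def by (simp add: mult.commute)
  ultimately have tail: "(\<lambda>i. c (i + l)) sums (g 1 - D2 l r t)" by (simp add: sums_iff_shift)
  have cauchy: "norm (c (i + l)) \<le> B * q^l * q^i" for i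
  proof -
    have "norm (c (i+l)) = cmod ((deriv ^^ (i+l)) (h_complex r t) 0) / fact (i+l)"
      unfolding c_def derivs by (simp add: norm_divide)
    also have "\<dots> \<le> (fact (i+l) * B / \<rho>^(i+l)) / fact (i+l)"
      using l by (intro divide_right_mono Cauchy_higher_deriv_bound[OF holb contc bounded])
        (use \<rho>1 in auto)
    also have "\<dots> = B * q^l * q^i" unfolding q(3) by (simp add: power_add field_simps)
    finally show ?thesis .
  qed
  have "(\<lambda>i. B * q^l * q^i) sums (B * q^l * (1 / (1 - q)))"
    by (intro sums_mult geometric_sums) (use q in auto)
  then have "\<bar>g 1 - D2 l r t\<bar> \<le> B * q^l * (1 / (1 - q))"
    using norm_suminf_le[of "\<lambda>i. c (i + l)", OF cauchy] tail by (simp add: sums_iff sums_unique)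
  also have "\<dots> \<le> B * q^l * 9"
    using q unfolding B_def by (intro mult_left_mono) (auto simp: field_simps)
  also have "\<dots> = 18 * 8^l * r^(2*l) * exp (- (t*r^2)/3)"
    unfolding B_def q_def by (simp add: power_mult_distrib power_mult)
  finally show ?thesis unfolding g_def .
qed

lemma h_taylor_remainder_le:
  assumes r0: "0 \<le> r" and r1: "r \<le> 1/3" and t: "t > 0" and l: "l \<ge> 1"
  shows "\<bar>h_fun r 1 t - D2 l r t\<bar> \<le> 18 * 8^l * fact l * 6^l / t^l * exp (- (t*r^2)/6)"
proof (cases "r = 0")
  case True
  have "(\<lambda>a. h_fun 0 a t) = (\<lambda>_. 1)" by (simp add: h_fun_def fun_eq_iff)
  then have "D2 l 0 t = (\<Sum>k<l. if k = 0 then 1 else 0)"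
    unfolding D2_def by (intro sum.cong refl) (auto simp: gr0_conv_Suc higher_deriv_const)
  also have "\<dots> = 1" using l by (simp add: sum.delta)
  finally show ?thesis using True t by (simp add: h_fun_def)
next
  case False
  then have "\<bar>h_fun r 1 t - D2 l r t\<bar> \<le> 18 * 8^l * r^(2*l) * exp (- (t*r^2)/3)"
    using h_taylor_remainder_le_power r0 r1 t l by simp
  also have "r^(2*l) = (t*r^2/6)^l * 6^l / t^l"
    using t by (simp add: power_mult power_mult_distrib power_divide)
  also have "18 * 8^l * ((t*r^2/6)^l * 6^l / t^l) * exp (- (t*r^2)/3)
      \<le> 18 * 8^l * ((fact l * exp (t*r^2/6)) * 6^l / t^l) * exp (- (t*r^2)/3)"
    using t power_le_fact_mult_exp[of "t*r^2/6" l]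
    by (intro mult_right_mono mult_left_mono divide_right_mono) auto
  also have "\<dots> = 18 * 8^l * fact l * 6^l / t^l * exp (- (t*r^2)/6)"
    by (simp add: field_simps flip: exp_add)
  finally show ?thesis .
qed

subsection \<open>Cauchy estimates for \<open>c \<mapsto> f(r,c,t)\<close>\<close>

definition f_complex :: "real \<Rightarrow> real \<Rightarrow> complex \<Rightarrow> complex" where
  "f_complex r t c = cos_sqrt_complex t (of_real (r^2) - c)"

lemma holomorphic_f_complex: "f_complex r t holomorphic_on UNIV"
  unfolding f_complex_def
  by (rule holomorphic_on_compose[OF _ holomorphic_on_subset[OF holomorphic_cos_sqrt_complex],
        unfolded o_def]) (auto intro: holomorphic_intros)

lemma f_fun_higher_deriv:
  "(deriv ^^ k) (f_complex r t) (of_real x) = of_real ((deriv ^^ k) (\<lambda>c. f_fun r c t) x)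
     \<and> ((deriv ^^ k) (\<lambda>c. f_fun r c t) has_real_derivative (deriv ^^ Suc k) (\<lambda>c. f_fun r c t) x) (at x)"
proof -
  have eq: "f_complex r t (of_real y) = of_real (f_fun r y t)" for y
    unfolding f_complex_def f_fun_def by (simp flip: cos_sqrt_complex_of_real)
  show ?thesis
    using real_higher_deriv_from_holomorphic[OF holomorphic_f_complex open_UNIV open_UNIV _ eq, of k]
    by auto
qed

lemma f_fun_higher_deriv_bound:
  assumes "0 \<le> r" "r \<le> 1/3" "t \<ge> 0" "n > 0"
  shows "\<bar>(deriv ^^ n) (\<lambda>c. f_fun r c t) 0\<bar> \<le> fact n * (2 * exp (12*t/25)) * 9^n"
proof -
  define B where "B = 2 * exp (12*t/25)"
  have r2: "r^2 \<le> 1/9" using assms(1,2) power_mono[of r "1/3" 2] by (simp add: power2_eq_square)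
  have holb: "f_complex r t holomorphic_on ball 0 (1/9)"
    using holomorphic_f_complex holomorphic_on_subset by blast
  have contc: "continuous_on (cball 0 (1/9)) (f_complex r t)"
    using holomorphic_f_complex holomorphic_on_imp_continuous_on holomorphic_on_subset by blast
  have bounded: "f_complex r t w \<in> ball 0 B" if "w \<in> ball 0 (1/9)" for w
  proof -
    have "norm (complex_of_real (r^2) - w) \<le> norm (complex_of_real (r^2)) + norm w"
      by (rule norm_triangle_ineq4)
    also have "\<dots> \<le> 2/9" using that r2 by (simp add: norm_power)
    finally have "sqrt (norm (complex_of_real (r^2) - w)) \<le> sqrt (2/9)" by (rule real_sqrt_le_mono)
    also have "sqrt (2/9) \<le> sqrt ((12/25)^2::real)" by (rule real_sqrt_le_mono) (simp add: power2_eq_square)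
    finally have "t * sqrt (norm (complex_of_real (r^2) - w)) \<le> t * (12/25)"
      using assms(3) by (intro mult_left_mono) auto
    then have "exp \<bar>\<bar>t\<bar> * sqrt (norm (complex_of_real (r^2) - w))\<bar> \<le> exp (12*t/25)"
      using assms(3) by simp
    moreover have "norm (f_complex r t w) \<le> exp \<bar>\<bar>t\<bar> * sqrt (norm (complex_of_real (r^2) - w))\<bar>"
      unfolding f_complex_def using norm_cos_sqrt_complex_le cosh_le_exp_abs by (rule order_trans)
    ultimately have "norm (f_complex r t w) < B"
      unfolding B_def using exp_gt_zero[of "12*t/25"] by linarith
    then show ?thesis by simp
  qed
  have "cmod ((deriv ^^ n) (f_complex r t) 0) \<le> fact n * B / (1/9)^n"
    by (rule Cauchy_higher_deriv_bound[OF holb contc bounded]) (use assms in auto)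
  moreover have "(deriv ^^ n) (f_complex r t) 0 = of_real ((deriv ^^ n) (\<lambda>c. f_fun r c t) 0)"
    using f_fun_higher_deriv[of n r t 0] by simp
  ultimately show ?thesis unfolding B_def by (simp add: power_divide)
qed

definition W2_const :: "nat \<Rightarrow> real" where
  "W2_const b = 4 * (\<Sum>k\<le>b-2. (1/4)^k / fact k * fact (k+1) * 9^(k+1))"

lemma W2_const_nonneg: "W2_const b \<ge> 0"
  unfolding W2_const_def by (intro mult_nonneg_nonneg sum_nonneg) auto

lemma abs_W2_le:
  assumes "0 \<le> r" "r \<le> 1/3" "t \<ge> 1"
  shows "\<bar>W2 b r t\<bar> \<le> W2_const b * exp (12*t/25)"
proof (cases "b \<ge> 2")
  case False then show ?thesis using W2_const_nonneg by (simp add: W2_def)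
next
  case True
  define S where "S = (\<Sum>k\<le>b-2. (1/4)^k / fact k * fact (k+1) * 9^(k+1) :: real)"
  have S0: "S \<ge> 0" unfolding S_def by (intro sum_nonneg) auto
  have "\<bar>(\<Sum>k\<le>b-2. (1/4)^k / fact k * (deriv ^^ (k+1)) (\<lambda>c. f_fun r c t) 0)\<bar>
      \<le> (\<Sum>k\<le>b-2. (1/4)^k / fact k * \<bar>(deriv ^^ (k+1)) (\<lambda>c. f_fun r c t) 0\<bar>)"
    by (rule order_trans[OF sum_abs]) (simp add: abs_mult)
  also have "\<dots> \<le> (\<Sum>k\<le>b-2. (1/4)^k / fact k * (fact (k+1) * (2 * exp (12*t/25)) * 9^(k+1)))"
    by (intro sum_mono mult_left_mono f_fun_higher_deriv_bound) (use assms in auto)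
  also have "\<dots> = 2 * exp (12*t/25) * S" unfolding S_def sum_distrib_left
    by (intro sum.cong refl) (simp add: field_simps)
  finally have "2 / t * \<bar>(\<Sum>k\<le>b-2. (1/4)^k / fact k * (deriv ^^ (k+1)) (\<lambda>c. f_fun r c t) 0)\<bar>
      \<le> 2 / t * (2 * exp (12*t/25) * S)"
    by (rule mult_left_mono) (use assms(3) in auto)
  then have "\<bar>W2 b r t\<bar> \<le> 2 / t * (2 * exp (12*t/25) * S)"
    using True assms(3) by (simp add: W2_def abs_mult)
  also have "\<dots> \<le> 2 * (2 * exp (12*t/25) * S)"
    using assms(3) S0 by (intro mult_right_mono) (auto simp: divide_simps)
  also have "\<dots> = W2_const b * exp (12*t/25)" unfolding W2_const_def S_def by simp
  finally show ?thesis .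
qed

subsection \<open>Splitting off the decaying part of the sine term\<close>

lemma sinc_sqrt_neg_square: assumes "q \<noteq> 0" shows "sinc_sqrt t (-(q^2)) = sinh (t*q) / q"
proof -
  have "(-1)^m * t^(2*m+1) * (-(q^2))^m / fact (2*m+1) = (t*q)^(2*m+1) / fact (2*m+1) / q" for m
  proof -
    have "(-(q^2))^m = ((-1) * q^2)^m" by simp
    then have e1: "(-(q^2))^m = (-1)^m * q^(2*m)" by (simp only: power_mult_distrib power_mult)
    have e2: "(-1::real)^m * (-1)^m = 1" by (simp flip: power_mult_distrib)
    have "(-1)^m * t^(2*m+1) * (-(q^2))^m / fact (2*m+1)
        = ((-1)^m * (-1)^m) * t^(2*m+1) * q^(2*m) / fact (2*m+1)"
      unfolding e1 by (simp add: ac_simps)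
    also have "\<dots> = t^(2*m+1) * q^(2*m) / fact (2*m+1)" unfolding e2 by simp
    also have "\<dots> = (t*q)^(2*m+1) / fact (2*m+1) / q"
      using assms by (simp add: power_mult_distrib)
    finally show ?thesis .
  qed
  then have terms: "(\<lambda>m. (-1)^m * t^(2*m+1) * (-(q^2))^m / fact (2*m+1))
      = (\<lambda>m. (t*q)^(2*m+1) / fact (2*m+1) / q)"
    by (rule ext)
  have "(\<lambda>m. (t*q)^(2*m+1) / fact (2*m+1) / q) sums (sinh (t*q) / q)"
    by (intro sums_divide sums_sinh_odd_powers)
  then show ?thesis unfolding sinc_sqrt_def terms by (rule sums_unique[symmetric])
qed

definition sinc_tail :: "real \<Rightarrow> real \<Rightarrow> real" where
  "sinc_tail r t = exp (-t/2) * exp (- t * sqrt (1/4 - r^2)) / (2 * sqrt (1/4 - r^2))"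

lemma sinc_term_eq_h_minus_tail:
  assumes "0 \<le> r" "r \<le> 1/3"
  shows "exp (-t/2) * sinc_sqrt t (r^2 - 1/4) = h_fun r 1 t - sinc_tail r t"
proof -
  define q where "q = sqrt (1/4 - r^2)"
  have r2: "r^2 \<le> 1/9" using assms power_mono[of r "1/3" 2] by (simp add: power2_eq_square)
  then have q2: "q^2 = 1/4 - r^2" unfolding q_def by simp
  have qp: "q > 0" unfolding q_def using r2 by simp
  have "1 - 4*1*r^2 = (2*q)^2" using q2 by (simp add: power2_eq_square algebra_simps)
  then have s1: "sqrt (1 - 4*1*r^2) = 2*q" using qp by (simp add: real_sqrt_mult)
  have "(-t/2 + t*q) * (1 + 2*q) = -t/2 + 2*t*q^2" by (simp add: algebra_simps power2_eq_square)
  also have "\<dots> = - (2*t*r^2)" unfolding q2 by (simp add: algebra_simps)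
  finally have "(-t/2 + t*q) * (1 + 2*q) = - (2*t*r^2)" .
  then have ex: "-t/2 + t*q = - (2*t*r^2) / (1 + 2*q)" using qp by (simp add: field_simps)
  have "sinc_sqrt t (r^2 - 1/4) = (exp (t*q) - exp (-(t*q))) / (2*q)"
    using sinc_sqrt_neg_square[of q t] qp q2 by (simp add: sinh_field_def)
  then show ?thesis
    unfolding h_fun_def sinc_tail_def s1 q_def[symmetric] ex[symmetric] exp_add
    by (simp add: diff_divide_distrib right_diff_distrib)
qed

lemma abs_sinc_tail_le:
  assumes "0 \<le> r" "r \<le> 1/3" "t \<ge> 0"
  shows "\<bar>sinc_tail r t\<bar> \<le> 2 * exp (-t/2)"
proof -
  define q where "q = sqrt (1/4 - r^2)"
  have r2: "r^2 \<le> 1/9" using assms power_mono[of r "1/3" 2] by (simp add: power2_eq_square)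
  have "sqrt ((1/4)^2) \<le> q" unfolding q_def using r2 by (intro real_sqrt_le_mono) (simp add: power2_eq_square)
  then have q4: "q \<ge> 1/4" by simp
  have "exp (- t * q) \<le> 1" using q4 assms(3) by simp
  then have "exp (-t/2) * exp (- t * q) / (2 * q) \<le> exp (-t/2) * 1 / (2 * (1/4))"
    using q4 by (intro divide_mono mult_left_mono) auto
  then show ?thesis using q4 unfolding sinc_tail_def q_def[symmetric] by simp
qed

subsection \<open>A pointwise Gaussian bound for \<open>m\<^sup>2\<close>\<close>

lemma exp_neg_le_gaussian_decay:
  fixes t r :: real
  assumes t: "t > 0" and r: "r^2 \<le> 1/9"
  shows "exp (- t/50) \<le> fact l * 100^l / t^l * exp (- (t/12) * r^2)"
proof -
  have "t * r^2 \<le> t * (1/9)" using r t by (intro mult_left_mono) auto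
  moreover have "(t/12) * r^2 = (t*r^2)/12" by simp
  ultimately have "- t/50 \<le> - t/100 + - (t/12) * r^2" using t by linarith
  then have "exp (- t/50) \<le> exp (- t/100) * exp (- (t/12) * r^2)"
    by (simp flip: exp_add)
  also have "\<dots> \<le> fact l * 100^l / t^l * exp (- (t/12) * r^2)"
    by (intro mult_right_mono exp_neg_le_fact_div_power t) simp
  finally show ?thesis .
qed

definition m2_const :: "nat \<Rightarrow> nat \<Rightarrow> real" where
  "m2_const b l = 18 * 8^l * fact l * 6^l + (2 + W2_const b) * (fact l * 100^l)"

lemma m2_const_pos: "m2_const b l > 0"
  unfolding m2_const_def using W2_const_nonneg[of b] by (intro add_pos_nonneg) auto

lemma m2_eq_cutoff_times_remainders:
  assumes "norm \<xi> \<le> 1/3"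
  shows "m2 chiL b l \<xi> t = chiL (norm \<xi>) * ((h_fun (norm \<xi>) 1 t - D2 l (norm \<xi>) t)
    - sinc_tail (norm \<xi>) t - exp (-t/2) * W2 b (norm \<xi>) t)"
  unfolding m2_def sinc_term_eq_h_minus_tail[OF norm_ge_zero assms] by (simp add: algebra_simps)

lemma abs_remainders_le:
  assumes r: "0 \<le> r" "r \<le> 1/3" and t: "t \<ge> 1" and l: "l \<ge> 1"
  shows "\<bar>(h_fun r 1 t - D2 l r t) - sinc_tail r t - exp (-t/2) * W2 b r t\<bar>
    \<le> m2_const b l / t^l * exp (- (t/12) * r^2)"
proof -
  define G where "G = exp (- (t/12) * r^2)"
  have r2: "r^2 \<le> 1/9" using r power_mono[of r "1/3" 2] by (simp add: power2_eq_square)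
  have decay: "exp (- t/50) \<le> fact l * 100^l / t^l * G"
    unfolding G_def using exp_neg_le_gaussian_decay r2 t by simp
  have "\<bar>h_fun r 1 t - D2 l r t\<bar> \<le> 18 * 8^l * fact l * 6^l / t^l * exp (- (t*r^2)/6)"
    using h_taylor_remainder_le r t l by simp
  also have "\<dots> \<le> 18 * 8^l * fact l * 6^l / t^l * G"
    unfolding G_def using t by (intro mult_left_mono) (auto simp: field_simps)
  finally have h: "\<bar>h_fun r 1 t - D2 l r t\<bar> \<le> 18 * 8^l * fact l * 6^l / t^l * G" .
  have "\<bar>sinc_tail r t\<bar> \<le> 2 * exp (-t/2)" using abs_sinc_tail_le r t by simp
  also have "\<dots> \<le> 2 * exp (-t/50)" using t by simp
  finally have tail: "\<bar>sinc_tail r t\<bar> \<le> 2 * exp (-t/50)" .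
  have "\<bar>exp (-t/2) * W2 b r t\<bar> \<le> exp (-t/2) * (W2_const b * exp (12*t/25))"
    unfolding abs_mult abs_exp_cancel using abs_W2_le r t by (intro mult_left_mono) auto
  also have "\<dots> = W2_const b * exp (-t/50)" by (simp flip: exp_add)
  finally have W: "\<bar>exp (-t/2) * W2 b r t\<bar> \<le> W2_const b * exp (-t/50)" .
  have "\<bar>(h_fun r 1 t - D2 l r t) - sinc_tail r t - exp (-t/2) * W2 b r t\<bar>
      \<le> 18 * 8^l * fact l * 6^l / t^l * G + (2 + W2_const b) * exp (-t/50)"
    using h tail W by (simp add: algebra_simps)
  also have "\<dots> \<le> 18 * 8^l * fact l * 6^l / t^l * G + (2 + W2_const b) * (fact l * 100^l / t^l * G)"
    using decay W2_const_nonneg[of b] by (intro add_left_mono mult_left_mono) auto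
  also have "\<dots> = m2_const b l / t^l * G"
    unfolding m2_const_def by (simp add: add_divide_distrib algebra_simps)
  finally show ?thesis unfolding G_def .
qed

lemma abs_m2_le_gaussian:
  fixes \<xi> :: "real^'n"
  assumes chi0: "\<And>r. r \<ge> 1/3 \<Longrightarrow> chiL r = 0"
    and chiB: "\<And>r. 0 \<le> r \<Longrightarrow> r \<le> 1/3 \<Longrightarrow> \<bar>chiL r\<bar> \<le> B"
    and t: "t \<ge> 1" and l: "l \<ge> 1"
  shows "\<bar>m2 chiL b l \<xi> t\<bar> \<le> B * m2_const b l / t^l * exp (- (t/12) * (norm \<xi>)^2)"
proof (cases "norm \<xi> < 1/3")
  case True
  then have "\<bar>m2 chiL b l \<xi> t\<bar> = \<bar>chiL (norm \<xi>)\<bar> * \<bar>(h_fun (norm \<xi>) 1 t - D2 l (norm \<xi>) t)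
      - sinc_tail (norm \<xi>) t - exp (-t/2) * W2 b (norm \<xi>) t\<bar>"
    by (simp add: m2_eq_cutoff_times_remainders abs_mult)
  also have "\<dots> \<le> B * (m2_const b l / t^l * exp (- (t/12) * (norm \<xi>)^2))"
    using True chiB[of 0] by (intro mult_mono chiB abs_remainders_le t l) auto
  finally show ?thesis by simp
next
  case False
  then show ?thesis
    using chiB[of 0] m2_const_pos[of b l] t by (simp add: m2_def chi0)
qed

subsection \<open>Measurability\<close>

text \<open>The \<open>k\<close>-th derivative in the second variable is a pointwise limit of difference
  quotients of the \<open>(k-1)\<close>-st one, taken along \<open>1/(n+1)\<close>.\<close>
lemma borel_measurable_higher_deriv:
  fixes \<phi> :: "real \<Rightarrow> real \<Rightarrow> real"
  assumes meas: "(\<lambda>p. \<phi> (fst p) (snd p)) \<in> borel_measurable borel"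
   and der: "\<And>x a k. x \<in> X \<Longrightarrow> A < a \<Longrightarrow> a < B \<Longrightarrow>
       ((deriv ^^ k) (\<phi> x) has_real_derivative (deriv ^^ Suc k) (\<phi> x) a) (at a)"
  shows "\<exists>G\<in>borel_measurable borel. \<forall>x\<in>X. \<forall>a. A < a \<and> a < B \<longrightarrow> G (x,a) = (deriv ^^ k) (\<phi> x) a"
proof (induction k)
  case 0
  show ?case using meas by (intro bexI[of _ "\<lambda>p. \<phi> (fst p) (snd p)"]) auto
next
  case (Suc k)
  then obtain G where G[measurable]: "G \<in> borel_measurable borel"
    and GE: "\<And>x a. x \<in> X \<Longrightarrow> A < a \<Longrightarrow> a < B \<Longrightarrow> G (x,a) = (deriv ^^ k) (\<phi> x) a" by blast
  define h where "h n = inverse (real (Suc n))" for n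
  define G' where "G' p = lim (\<lambda>n. (G (fst p, snd p + h n) - G p) / h n)" for p
  have "G' \<in> borel_measurable borel"
    unfolding G'_def
  proof (rule borel_measurable_lim_metric)
    fix n
    have "(\<lambda>p::real\<times>real. (fst p, snd p + h n)) \<in> borel_measurable borel"
      by (intro borel_measurable_continuous_onI continuous_intros)
    then have "(\<lambda>p. G (fst p, snd p + h n)) \<in> borel_measurable borel"
      using measurable_compose[OF _ G] by (simp add: o_def)
    then show "(\<lambda>p. (G (fst p, snd p + h n) - G p) / h n) \<in> borel_measurable borel"
      by measurable
  qed
  moreover have "G' (x,a) = (deriv ^^ Suc k) (\<phi> x) a" if x: "x \<in> X" and a: "A < a" "a < B" for x a
  proof -
    define f where "f = (deriv ^^ k) (\<phi> x)"
    have h0: "h \<longlonglongrightarrow> 0" unfolding h_def by (rule LIMSEQ_inverse_real_of_nat)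
    then have hf: "filterlim h (at 0) sequentially"
      unfolding filterlim_at by (auto simp: h_def)
    have "((\<lambda>y. (f (a + y) - f a) / y) \<longlongrightarrow> (deriv ^^ Suc k) (\<phi> x) a) (at 0)"
      using der[OF x a] unfolding f_def DERIV_def by simp
    from filterlim_compose[OF this hf]
    have L: "(\<lambda>n. (f (a + h n) - f a) / h n) \<longlonglongrightarrow> (deriv ^^ Suc k) (\<phi> x) a"
      by (simp add: o_def)
    have "eventually (\<lambda>n. h n < B - a) sequentially"
      using h0 a by (intro order_tendstoD) auto
    then have "eventually (\<lambda>n. (f (a + h n) - f a) / h n = (G (x, a + h n) - G (x,a)) / h n) sequentially"
    proof eventually_elim
      case (elim n)
      have "h n > 0" unfolding h_def by simp
      then show ?case using GE[OF x] a elim unfolding f_def by simp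
    qed
    with L have "(\<lambda>n. (G (x, a + h n) - G (x,a)) / h n) \<longlonglongrightarrow> (deriv ^^ Suc k) (\<phi> x) a"
      by (rule Lim_transform_eventually)
    then show ?thesis unfolding G'_def by (simp add: limI)
  qed
  ultimately show ?case by blast
qed

lemma borel_measurable_f_fun_higher_deriv [measurable]:
  "(\<lambda>r. (deriv ^^ k) (\<lambda>c. f_fun r c t) 0) \<in> borel_measurable borel"
proof -
  have cont: "continuous_on UNIV (cos_sqrt_complex t)"
    using holomorphic_cos_sqrt_complex holomorphic_on_imp_continuous_on by blast
  have "(\<lambda>p::real\<times>real. Re (cos_sqrt_complex t (of_real (fst p ^ 2 - snd p)))) \<in> borel_measurable borel"
    by (intro borel_measurable_continuous_onI continuous_intros continuous_on_compose2[OF cont]) auto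
  then have meas: "(\<lambda>p. f_fun (fst p) (snd p) t) \<in> borel_measurable borel"
    unfolding f_fun_def cos_sqrt_complex_of_real by simp
  have der: "((deriv ^^ k) (\<lambda>c. f_fun r c t) has_real_derivative (deriv ^^ Suc k) (\<lambda>c. f_fun r c t) a) (at a)"
    if "r \<in> UNIV" "-1 < a" "a < 1" for r a k
    using f_fun_higher_deriv[of k r t a] by blast
  obtain G where G[measurable]: "G \<in> borel_measurable borel"
    and GE: "\<forall>r\<in>UNIV. \<forall>a. -1 < a \<and> a < 1 \<longrightarrow> G (r, a) = (deriv ^^ k) (\<lambda>c. f_fun r c t) a"
    using borel_measurable_higher_deriv[OF meas der, where k=k] by blast
  have "(\<lambda>r. (deriv ^^ k) (\<lambda>c. f_fun r c t) 0) = (\<lambda>r. G (r, 0))" using GE by simp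
  then show ?thesis by simp
qed

lemma borel_measurable_W2: "(\<lambda>r. W2 b r t) \<in> borel_measurable borel"
  unfolding W2_def by measurable

lemma h_fun_higher_deriv_measurable:
  "\<exists>G. G \<in> borel_measurable borel \<and> (\<forall>r\<in>{0..1/3}. G r = (deriv ^^ k) (\<lambda>a. h_fun r a t) 0)"
proof -
  have "(\<lambda>p. h_fun (fst p) (snd p) t) \<in> borel_measurable (borel \<Otimes>\<^sub>M borel)"
    unfolding h_fun_def by measurable
  then have meas: "(\<lambda>p. h_fun (fst p) (snd p) t) \<in> borel_measurable borel" by (simp add: borel_prod)
  have der: "((deriv ^^ k) (\<lambda>a. h_fun r a t) has_real_derivative (deriv ^^ Suc k) (\<lambda>a. h_fun r a t) a) (at a)"
    if "r \<in> {0..1/3}" "-1 < a" "a < 1" for r a k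
    using that h_fun_higher_deriv[of r a k t] by simp
  obtain G where G: "G \<in> borel_measurable borel"
    and GE: "\<forall>r\<in>{0..1/3}. \<forall>a. -1 < a \<and> a < 1 \<longrightarrow> G (r, a) = (deriv ^^ k) (\<lambda>a. h_fun r a t) a"
    using borel_measurable_higher_deriv[OF meas der, where k=k] by blast
  have "(\<lambda>r. G (r, 0)) \<in> borel_measurable borel" using G by measurable
  then show ?thesis using GE by (intro exI[of _ "\<lambda>r. G (r, 0)"]) simp
qed

lemma borel_measurable_m2:
  assumes cont: "continuous_on {0..} chiL" and chi0: "\<And>r. r \<ge> 1/3 \<Longrightarrow> chiL r = 0"
  shows "(\<lambda>\<xi>::real^'n. m2 chiL b l \<xi> t) \<in> borel_measurable borel"
proof -
  have "\<forall>k. \<exists>G. G \<in> borel_measurable borel \<and> (\<forall>r\<in>{0..1/3}. G r = (deriv ^^ k) (\<lambda>a. h_fun r a t) 0)"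
    using h_fun_higher_deriv_measurable by blast
  then obtain GD where GD[measurable]: "\<And>k. GD k \<in> borel_measurable borel"
    and GD_eq: "\<And>k r. r \<in> {0..1/3} \<Longrightarrow> GD k r = (deriv ^^ k) (\<lambda>a. h_fun r a t) 0"
    by (metis choice)
  define cutoff where "cutoff r = chiL (max 0 r)" for r
  have "continuous_on UNIV cutoff" unfolding cutoff_def
    by (rule continuous_on_compose2[OF cont]) (auto intro: continuous_intros)
  then have [measurable]: "cutoff \<in> borel_measurable borel" by (rule borel_measurable_continuous_onI)
  note borel_measurable_W2[measurable]
  define M where "M r = (if r < 1/3 then cutoff r * ((h_fun r 1 t - sinc_tail r t)
      - exp (-t/2) * W2 b r t - (\<Sum>k<l. 1 / fact k * GD k r)) else 0)" for r
  have "M \<in> borel_measurable borel" unfolding M_def h_fun_def sinc_tail_def by measurable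
  moreover have "m2 chiL b l \<xi> t = M (norm \<xi>)" for \<xi> :: "real^'n"
  proof (cases "norm \<xi> < 1/3")
    case True
    then have "D2 l (norm \<xi>) t = (\<Sum>k<l. 1 / fact k * GD k (norm \<xi>))"
      unfolding D2_def using GD_eq by simp
    then show ?thesis
      using True sinc_term_eq_h_minus_tail[of "norm \<xi>" t] unfolding M_def m2_def cutoff_def by simp
  qed (simp add: M_def m2_def chi0)
  ultimately show ?thesis by simp
qed

subsection \<open>Gaussian integrals\<close>

lemma nn_integral_gaussian_1d:
  assumes "c > 0"
  shows "(\<integral>\<^sup>+y. ennreal (exp (- c * y^2)) \<partial>lborel) = ennreal (sqrt (pi / c))"
proof -
  define \<sigma> where "\<sigma> = sqrt (1 / (2*c))"
  have \<sigma>: "\<sigma> > 0" "\<sigma>^2 = 1/(2*c)" unfolding \<sigma>_def using assms by simp_all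
  have "exp (- c * y^2) = sqrt (pi / c) * normal_density 0 \<sigma> y" for y
    using assms unfolding normal_density_def \<sigma>(2) by (simp add: real_sqrt_divide field_simps)
  then have "(\<integral>\<^sup>+y. ennreal (exp (- c * y^2)) \<partial>lborel)
      = (\<integral>\<^sup>+y. ennreal (sqrt (pi / c)) * ennreal (normal_density 0 \<sigma> y) \<partial>lborel)"
    using assms by (intro nn_integral_cong) (simp add: ennreal_mult)
  also have "\<dots> = ennreal (sqrt (pi / c)) * (\<integral>\<^sup>+y. ennreal (normal_density 0 \<sigma> y) \<partial>lborel)"
    by (rule nn_integral_cmult) simp
  also have "(\<integral>\<^sup>+y. ennreal (normal_density 0 \<sigma> y) \<partial>lborel) = 1"
    using \<sigma> by (subst nn_integral_eq_integral) (auto intro: integrable_normal_density)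
  finally show ?thesis by simp
qed

lemma nn_integral_gaussian:
  assumes "c > 0"
  shows "(\<integral>\<^sup>+x. ennreal (exp (- c * (norm (x::'a::euclidean_space))^2)) \<partial>lborel)
    = ennreal (sqrt (pi / c) ^ DIM('a))"
proof -
  have prod: "ennreal (exp (- c * (norm x)^2)) = (\<Prod>b\<in>Basis. ennreal (exp (- c * (x \<bullet> b)^2)))"
    for x :: 'a
  proof -
    have "(norm x)^2 = (\<Sum>b\<in>Basis. (x \<bullet> b)^2)"
      unfolding power2_norm_eq_inner by (subst euclidean_inner) (simp add: power2_eq_square)
    then show ?thesis by (simp add: sum_distrib_left exp_sum prod_ennreal)
  qed
  have "(\<integral>\<^sup>+x. ennreal (exp (- c * (norm (x::'a))^2)) \<partial>lborel)
      = (\<Prod>b\<in>(Basis::'a set). (\<integral>\<^sup>+y. ennreal (exp (- c * y^2)) \<partial>lborel))"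
    unfolding prod by (rule nn_integral_lborel_prod) auto
  also have "\<dots> = ennreal (sqrt (pi / c) ^ DIM('a))"
    using nn_integral_gaussian_1d[OF assms] assms by (simp add: ennreal_power)
  finally show ?thesis .
qed

lemma L2_norm_le_gaussian_bound:
  fixes f :: "'a::euclidean_space \<Rightarrow> real"
  assumes meas: "f \<in> borel_measurable borel" and c: "c > 0"
    and bound: "\<And>x. \<bar>f x\<bar> \<le> A * exp (- c * (norm x)^2)"
  shows "integrable lborel (\<lambda>x. (f x)^2)
    \<and> sqrt (\<integral>x. (f x)^2 \<partial>lborel) \<le> A * (pi / (2*c)) powr (DIM('a) / 4)"
proof -
  have "\<bar>f 0\<bar> \<le> A" using bound[of 0] by simp
  then have A: "A \<ge> 0" by (meson abs_ge_zero order_trans)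
  have sq: "(f x)^2 \<le> A^2 * exp (- (2*c) * (norm x)^2)" for x
  proof -
    have "\<bar>f x\<bar>^2 \<le> (A * exp (- c * (norm x)^2))^2" by (rule power_mono[OF bound]) simp
    also have "\<dots> = A^2 * exp (of_nat 2 * (- c * (norm x)^2))"
      by (simp only: power_mult_distrib exp_of_nat_mult)
    finally show ?thesis by (simp add: mult.assoc)
  qed
  define V where "V = A^2 * sqrt (pi / (2*c)) ^ DIM('a)"
  have fm: "(\<lambda>x. (f x)^2) \<in> borel_measurable lborel" using meas by simp
  have "(\<integral>\<^sup>+x. ennreal ((f x)^2) \<partial>lborel)
      \<le> (\<integral>\<^sup>+x. ennreal (A^2) * ennreal (exp (- (2*c) * (norm (x::'a))^2)) \<partial>lborel)"
    using sq by (intro nn_integral_mono) (simp add: ennreal_mult[symmetric] ennreal_leI)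
  also have "\<dots> = ennreal (A^2) * (\<integral>\<^sup>+x. ennreal (exp (- (2*c) * (norm (x::'a))^2)) \<partial>lborel)"
    by (rule nn_integral_cmult) measurable
  also have "\<dots> = ennreal V"
    using nn_integral_gaussian[of "2*c", where 'a='a] c by (simp add: V_def ennreal_mult)
  finally have nn: "(\<integral>\<^sup>+x. ennreal ((f x)^2) \<partial>lborel) \<le> ennreal V" .
  have "integrable lborel (\<lambda>x. (f x)^2)"
  proof (rule integrableI_bounded[OF fm])
    show "(\<integral>\<^sup>+x. ennreal (norm ((f x)^2)) \<partial>lborel) < \<infinity>"
      using nn by (simp add: le_less_trans)
  qed
  moreover have "(\<integral>x. (f x)^2 \<partial>lborel) \<le> V"
    unfolding integral_eq_nn_integral[OF fm AE_I2[OF zero_le_power2]]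
    using A c by (intro enn2real_leI nn) (simp add: V_def)
  then have "sqrt (\<integral>x. (f x)^2 \<partial>lborel) \<le> sqrt V" by (rule real_sqrt_le_mono)
  moreover have "sqrt V = A * (pi / (2*c)) powr (DIM('a) / 4)"
  proof -
    have "sqrt (sqrt (pi / (2*c)) ^ DIM('a)) = (((pi / (2*c)) powr (1/2)) powr DIM('a)) powr (1/2)"
      using c by (simp add: powr_half_sqrt powr_realpow)
    also have "\<dots> = (pi / (2*c)) powr (DIM('a) / 4)" by (simp add: powr_powr)
    finally show ?thesis unfolding V_def using A by (simp add: real_sqrt_mult)
  qed
  ultimately show ?thesis by simp
qed

lemma gaussian_decay_rate:
  fixes t K N :: real assumes t: "t > 0"
  shows "K / t^l * (pi / (2*(t/12))) powr (N/4) = K * (6*pi) powr (N/4) * t powr (- N/4 - real l)"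
proof -
  have "pi / (2*(t/12)) = (6*pi) / t" by simp
  then have "(pi / (2*(t/12))) powr (N/4) = (6*pi) powr (N/4) / t powr (N/4)"
    by (simp only: powr_divide)
  moreover have "t^l = t powr real l" using t by (simp add: powr_realpow)
  moreover have "t powr real l * t powr (N/4) = t powr (N/4 + real l)"
    by (simp add: powr_add)
  moreover have "- N/4 - real l = - (N/4 + real l)" by simp
  then have "t powr (- N/4 - real l) = 1 / t powr (N/4 + real l)" by (simp only: powr_minus_divide)
  ultimately show ?thesis by (simp add: field_simps)
qed

lemma L2_norm_m2_le:
  fixes chiL :: "real \<Rightarrow> real"
  assumes cont: "continuous_on {0..} chiL" and chi0: "\<And>r. r \<ge> 1/3 \<Longrightarrow> chiL r = 0"
    and chiB: "\<And>r. 0 \<le> r \<Longrightarrow> r \<le> 1/3 \<Longrightarrow> \<bar>chiL r\<bar> \<le> B"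
    and t: "t \<ge> 1" and l: "l \<ge> 1"
  shows "integrable lborel (\<lambda>\<xi>::real^'n. (m2 chiL b l \<xi> t)^2) \<and>
    sqrt (\<integral>\<xi>. (m2 chiL b l (\<xi>::real^'n) t)^2 \<partial>lborel)
      \<le> B * m2_const b l * (6*pi) powr (CARD('n) / 4) * t powr (- real CARD('n) / 4 - real l)"
proof -
  have bound: "\<bar>m2 chiL b l \<xi> t\<bar> \<le> B * m2_const b l / t^l * exp (- (t/12) * (norm \<xi>)^2)"
    for \<xi> :: "real^'n"
    by (rule abs_m2_le_gaussian[OF chi0 chiB t l])
  have rate: "B * m2_const b l / t^l * (pi / (2 * (t/12))) powr (DIM(real^'n) / 4)
      = B * m2_const b l * (6*pi) powr (CARD('n) / 4) * t powr (- real CARD('n) / 4 - real l)"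
    using gaussian_decay_rate[of t "B * m2_const b l" l "real DIM(real^'n)"] t by simp
  have "0 < t/12" using t by simp
  from L2_norm_le_gaussian_bound[OF borel_measurable_m2[OF cont chi0] this bound]
  show ?thesis unfolding rate .
qed

theorem proposition4:
  fixes chiL :: "real \<Rightarrow> real" and b l :: nat
  assumes "b \<ge> 1" and "l \<ge> 1"
    and "smooth_on_real {0..} chiL"
    and "\<And>r. r \<ge> 1/3 \<Longrightarrow> chiL r = 0"
    and "\<And>r. 0 \<le> r \<Longrightarrow> r \<le> 1/4 \<Longrightarrow> chiL r = 1"
  shows "\<exists>C>0. \<forall>t\<ge>1.
    integrable lborel (\<lambda>\<xi>::real^'n. (m2 chiL b l \<xi> t)^2) \<and>
    sqrt (\<integral>\<xi>. (m2 chiL b l (\<xi>::real^'n) t)^2 \<partial>lborel)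
      \<le> (if b \<ge> 2 then C * t ^ (2*(b-1)-1) * exp (-t/2) + C * t powr (- real CARD('n) / 4 - real l)
         else C * exp (-t/2) + C * t powr (- real CARD('n) / 4 - real l))"
proof -
  have cont: "continuous_on {0..} chiL" using assms(3) by (rule smooth_on_real_imp_continuous_on)
  have "compact (chiL ` {0..1/3})"
    by (rule compact_continuous_image[OF continuous_on_subset[OF cont]]) auto
  then obtain B where B: "B > 0" "\<And>r. 0 \<le> r \<Longrightarrow> r \<le> 1/3 \<Longrightarrow> \<bar>chiL r\<bar> \<le> B"
    by (metis atLeastAtMost_iff bounded_pos compact_imp_bounded image_eqI real_norm_def)
  define C where "C = B * m2_const b l * (6*pi) powr (CARD('n) / 4)"
  show ?thesis
  proof (intro exI[of _ C] conjI allI impI)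
    show "C > 0" unfolding C_def using B m2_const_pos by simp
    fix t :: real assume t: "t \<ge> 1"
    have "integrable lborel (\<lambda>\<xi>::real^'n. (m2 chiL b l \<xi> t)^2) \<and>
        sqrt (\<integral>\<xi>. (m2 chiL b l (\<xi>::real^'n) t)^2 \<partial>lborel) \<le> C * t powr (- real CARD('n) / 4 - real l)"
      unfolding C_def by (rule L2_norm_m2_le[OF cont assms(4) B(2) t assms(2)])
    moreover have "0 \<le> C * t ^ (2*(b-1)-1) * exp (-t/2)" "0 \<le> C * exp (-t/2)"
      using t \<open>C > 0\<close> by simp_all
    ultimately show "integrable lborel (\<lambda>\<xi>::real^'n. (m2 chiL b l \<xi> t)^2)"
      "sqrt (\<integral>\<xi>. (m2 chiL b l (\<xi>::real^'n) t)^2 \<partial>lborel)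
        \<le> (if b \<ge> 2 then C * t ^ (2*(b-1)-1) * exp (-t/2) + C * t powr (- real CARD('n) / 4 - real l)
           else C * exp (-t/2) + C * t powr (- real CARD('n) / 4 - real l))"
      by auto
  qed
qed

end
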